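(* Let $m\geq 0$ and $n>1$. There is an injection from $P_2(-m+1,n)$ to $Q_2(m,n)$.
   Context: Partitions are identified with their $m$-Durfee rectangle symbols, defined as follows. - For a partition $\lambda$ of $n$ with $\ell(\lambda)>m$ parts, let $j\geq1$ be the largest integer with $\lambda_{m+j}\geq j$. Let $\alpha$ be the partition whose $i$-th part is the number of $k\leq m+j$ with $\lambda_k\geq j+i$ (the columns right of the $(m+j)\times j$ rectangle). Let $\beta=(\lambda_{m+j+1},\lambda_{m+j+2},\ldots)$ (the rows below the rectangle). - If $\ell(\lambda)\leq m$, set $j=0$, $\alpha=\lambda'$ (the conjugate) and $\beta=\emptyset$. The symbol is written $(\alpha,\beta)_{(m+j)\times j}$, with $\ell(\cdot)$ denoting number of parts. The first part of an empty sequence is taken to be $0$. $P(-m+1,n)$ is the set of partitions of $n$ with rank (largest part minus number of parts) at least $-m+1$. $P_2(-m+1,n)$ is the set of those $(\alpha,\beta)_{(m+j)\times j}\in P(-m+1,n)$ with $j\geq1$ and $\beta_1=j-1$. The rank-set of $\lambda=(\lambda_1,\ldots,\lambda_\ell)$ is $[-\lambda_1,1-\lambda_2,\ldots,\ell-1-\lambda_\ell,\ell,\ell+1,\ldots]$. $Q(m,n)$ is the set of partitions of $n$ whose rank-set contains $m$. $Q_2(m,n)$ is the set of $(\gamma,\delta)_{(m+j')\times j'}\in Q(m,n)$ with $j'\geq1$, $\ell(\delta)-\ell(\gamma)\geq 0$ and $\gamma_1<m+j'$. *)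

theory Defs
  imports Main
begin

text \<open>A partition of n is a weakly decreasing list of positive naturals summing to n.
  Parts are 1-indexed in the paper: lambda_k = lam ! (k - 1).\<close>

definition is_partition :: "nat list \<Rightarrow> nat \<Rightarrow> bool" where
  "is_partition lam n \<longleftrightarrow> sorted_wrt (\<ge>) lam \<and> 0 \<notin> set lam \<and> sum_list lam = n"

definition partitions :: "nat \<Rightarrow> nat list set" where
  "partitions n = {lam. is_partition lam n}"

definition first_part :: "nat list \<Rightarrow> nat" where
  "first_part xs = (if xs = [] then 0 else hd xs)"

text \<open>The parameter j of the m-Durfee rectangle ((m+j) x j).\<close>
definition durfee_j :: "nat \<Rightarrow> nat list \<Rightarrow> nat" where
  "durfee_j m lam = (if length lam \<le> m then 0
     else (GREATEST j. 1 \<le> j \<and> m + j \<le> length lam \<and> j \<le> lam ! (m + j - 1)))"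

text \<open>alpha: i-th part is the number of k \<le> m+j with lambda_k \<ge> j+i
  (for j = 0 and length lam \<le> m this is exactly the conjugate of lam).\<close>
definition durfee_alpha :: "nat \<Rightarrow> nat list \<Rightarrow> nat list" where
  "durfee_alpha m lam = (let j = durfee_j m lam in
     filter (\<lambda>x. 0 < x)
       (map (\<lambda>i. card {k. k < m + j \<and> k < length lam \<and> j + i \<le> lam ! k})
            [1..<Suc (first_part lam)]))"

definition durfee_beta :: "nat \<Rightarrow> nat list \<Rightarrow> nat list" where
  "durfee_beta m lam = drop (m + durfee_j m lam) lam"

definition rank :: "nat list \<Rightarrow> int" where
  "rank lam = int (first_part lam) - int (length lam)"

definition P_set :: "nat \<Rightarrow> nat \<Rightarrow> nat list set" where
  "P_set m n = {lam \<in> partitions n. rank lam \<ge> 1 - int m}"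

definition P2_set :: "nat \<Rightarrow> nat \<Rightarrow> nat list set" where
  "P2_set m n = {lam \<in> P_set m n. durfee_j m lam \<ge> 1 \<and>
      first_part (durfee_beta m lam) = durfee_j m lam - 1}"

definition rank_set :: "nat list \<Rightarrow> int set" where
  "rank_set lam = {int k - 1 - int (lam ! (k - 1)) | k. 1 \<le> k \<and> k \<le> length lam}
                  \<union> {int k | k. length lam \<le> k}"

definition Q_set :: "nat \<Rightarrow> nat \<Rightarrow> nat list set" where
  "Q_set m n = {lam \<in> partitions n. int m \<in> rank_set lam}"

definition Q2_set :: "nat \<Rightarrow> nat \<Rightarrow> nat list set" where
  "Q2_set m n = {lam \<in> Q_set m n. durfee_j m lam \<ge> 1 \<and>
      length (durfee_alpha m lam) \<le> length (durfee_beta m lam) \<and>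
      first_part (durfee_alpha m lam) < m + durfee_j m lam}"

end

theory Submission
  imports Defs
begin

(* Write lam in P2(-m+1,n) with m-Durfee parameter j as lam_1, the front lam_2, ..., lam_(m+j)
   (all parts >= j) and beta (all parts < j, since beta_1 = j - 1). Delete lam_1 and spend it
   on a new part j after the front, one extra cell on every part of beta, and
   c = lam_1 + m - l(lam) parts equal to 1; the rank condition says exactly that c >= 1.
   The image mu satisfies mu_(m+j) = mu_(m+j+1) = j, so its m-Durfee parameter is again j and
   m = (m+j+1) - 1 - mu_(m+j+1) lies in its rank set; its length lam_1 + m bounds the number of
   columns of alpha, and the part j at position m+j keeps alpha_1 below m+j.
   The map is inverted by reading off lam_1 = l(mu) - m and the front, and recovering beta from
   the parts >= 2 after position m+j, each lowered by one. *)

lemma sorted_wrt_replicate: "R x x \<Longrightarrow> sorted_wrt R (replicate n x)"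
  by (induction n) auto

lemma nonincreasing_nth_antimono:
  fixes xs :: "nat list"
  assumes "sorted_wrt (\<ge>) xs" "i \<le> k" "k < length xs"
  shows "xs ! k \<le> xs ! i"
  using assms sorted_wrt_nth_less[OF assms(1), of i k] by (cases "i = k") auto

lemma nonincreasing_le_nth_of_drop:
  fixes xs :: "nat list"
  assumes "sorted_wrt (\<ge>) xs" "x \<in> set (drop k xs)"
  shows "x \<le> xs ! k"
proof -
  obtain i where "i < length xs - k" "x = xs ! (k + i)"
    using assms(2) by (auto simp: in_set_conv_nth)
  then show ?thesis using nonincreasing_nth_antimono[OF assms(1), of k "k + i"] by simp
qed

lemma nonincreasing_nth_le_of_take:
  fixes xs :: "nat list"
  assumes "sorted_wrt (\<ge>) xs" "x \<in> set (take k xs)" "k \<le> length xs"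
  shows "xs ! (k - 1) \<le> x"
proof -
  obtain i where "i < k" "x = xs ! i"
    using assms(2) by (auto simp: in_set_conv_nth)
  then show ?thesis using nonincreasing_nth_antimono[OF assms(1), of i "k - 1"] assms(3) by simp
qed

lemma nonincreasing_nth_le_hd:
  fixes xs :: "nat list"
  assumes "sorted_wrt (\<ge>) xs" "k < length xs"
  shows "xs ! k \<le> hd xs"
  using nonincreasing_nth_antimono[OF assms(1), of 0 k] assms(2) by (cases xs) auto

lemma rank_set_nth:
  assumes "k < length lam"
  shows "int k - int (lam ! k) \<in> rank_set lam"
proof -
  have "int (Suc k) - 1 - int (lam ! (Suc k - 1)) = int k - int (lam ! k)" by simp
  with assms show ?thesis unfolding rank_set_def
    by (intro UnI1 CollectI exI[of _ "Suc k"]) auto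
qed

lemma durfee_j_spec:
  assumes "0 \<notin> set lam" "m < length lam"
  shows "1 \<le> durfee_j m lam" "m + durfee_j m lam \<le> length lam"
    "durfee_j m lam \<le> lam ! (m + durfee_j m lam - 1)"
proof -
  define P where "P j \<longleftrightarrow> 1 \<le> j \<and> m + j \<le> length lam \<and> j \<le> lam ! (m + j - 1)" for j
  have "lam ! m \<noteq> 0" using assms by (metis nth_mem)
  then have "P 1" using assms(2) by (simp add: P_def)
  moreover have "\<And>j. P j \<Longrightarrow> j \<le> length lam" by (simp add: P_def)
  ultimately have "P (Greatest P)" by (rule GreatestI_nat)
  moreover have "durfee_j m lam = Greatest P"
    using assms(2) unfolding durfee_j_def P_def by simp
  ultimately show "1 \<le> durfee_j m lam" "m + durfee_j m lam \<le> length lam"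
    "durfee_j m lam \<le> lam ! (m + durfee_j m lam - 1)" by (simp_all add: P_def)
qed

lemma durfee_j_eqI:
  fixes mu :: "nat list"
  assumes "sorted_wrt (\<ge>) mu" "1 \<le> j" "m + j < length mu"
    "j \<le> mu ! (m + j - 1)" "mu ! (m + j) \<le> j"
  shows "durfee_j m mu = j"
proof -
  have "(GREATEST j. 1 \<le> j \<and> m + j \<le> length mu \<and> j \<le> mu ! (m + j - 1)) = j"
  proof (rule Greatest_equality)
    fix y assume y: "1 \<le> y \<and> m + y \<le> length mu \<and> y \<le> mu ! (m + y - 1)"
    show "y \<le> j"
    proof (rule ccontr)
      assume "\<not> y \<le> j"
      then have "mu ! (m + y - 1) \<le> mu ! (m + j)"
        using nonincreasing_nth_antimono[OF assms(1), of "m + j" "m + y - 1"] y by auto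
      then show False using y assms(5) \<open>\<not> y \<le> j\<close> by simp
    qed
  qed (use assms in simp)
  then show ?thesis using assms(3) by (simp add: durfee_j_def)
qed

lemma first_part_durfee_alpha_less:
  assumes "durfee_j m mu = j" "1 \<le> j" "m + j \<le> length mu" "mu ! (m + j - 1) \<le> j"
  shows "first_part (durfee_alpha m mu) < m + j"
proof -
  have "card {k. k < m + j \<and> k < length mu \<and> j + i \<le> mu ! k} < m + j" if "1 \<le> i" for i
  proof -
    have "{k. k < m + j \<and> k < length mu \<and> j + i \<le> mu ! k} \<subseteq> {..<m + j - 1}"
    proof
      fix k assume k: "k \<in> {k. k < m + j \<and> k < length mu \<and> j + i \<le> mu ! k}"
      then have "k \<noteq> m + j - 1" using assms(4) that by auto
      with k show "k \<in> {..<m + j - 1}" by auto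
    qed
    then have "card {k. k < m + j \<and> k < length mu \<and> j + i \<le> mu ! k} \<le> m + j - 1"
      by (metis card_lessThan card_mono finite_lessThan)
    then show ?thesis using assms(2) by simp
  qed
  then have "\<forall>x \<in> set (durfee_alpha m mu). x < m + j"
    using assms(1) by (auto simp: durfee_alpha_def Let_def)
  then show ?thesis using assms(2) by (cases "durfee_alpha m mu") (auto simp: first_part_def)
qed

lemma length_durfee_alpha_le:
  assumes "sorted_wrt (\<ge>) mu" "durfee_j m mu = j"
  shows "length (durfee_alpha m mu) \<le> first_part mu - j"
proof -
  define G where "G i = card {k. k < m + j \<and> k < length mu \<and> j + i \<le> mu ! k}" for i
  define I where "I = filter (\<lambda>i. 0 < G i) [1..<Suc (first_part mu)]"
  have "set I \<subseteq> {1..first_part mu - j}"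
  proof
    fix i assume i: "i \<in> set I"
    then have "0 < G i" by (simp add: I_def)
    then have "{k. k < m + j \<and> k < length mu \<and> j + i \<le> mu ! k} \<noteq> {}"
      unfolding G_def by (metis card.empty less_irrefl)
    then obtain k where "k < length mu" "j + i \<le> mu ! k" by blast
    moreover have "mu ! k \<le> first_part mu"
      using nonincreasing_nth_le_hd[OF assms(1) \<open>k < length mu\<close>] \<open>k < length mu\<close>
      by (auto simp: first_part_def)
    ultimately show "i \<in> {1..first_part mu - j}" using i by (auto simp: I_def)
  qed
  then have "card (set I) \<le> first_part mu - j"
    using card_mono[OF finite_atLeastAtMost] by (metis card_atLeastAtMost diff_Suc_1)
  moreover have "durfee_alpha m mu = map G I"
    unfolding durfee_alpha_def Let_def assms(2) filter_map I_def G_def by (simp add: comp_def)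
  moreover have "distinct I" by (simp add: I_def)
  ultimately show ?thesis by (simp add: distinct_card)
qed

lemma Q2_setI:
  assumes "is_partition mu n" "1 \<le> j" "m + j < length mu"
    "mu ! (m + j - 1) = j" "mu ! (m + j) = j" "hd mu + m \<le> length mu"
  shows "mu \<in> Q2_set m n"
proof -
  have sorted: "sorted_wrt (\<ge>) mu" using assms(1) by (simp add: is_partition_def)
  have j: "durfee_j m mu = j" using durfee_j_eqI[OF sorted] assms(2-5) by simp
  have "int m \<in> rank_set mu" using rank_set_nth[OF assms(3)] assms(5) by simp
  moreover have "length (durfee_alpha m mu) \<le> length (durfee_beta m mu)"
    using length_durfee_alpha_le[OF sorted j] assms(3,6)
    by (auto simp: durfee_beta_def j first_part_def split: if_splits)
  moreover have "first_part (durfee_alpha m mu) < m + j"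
    using first_part_durfee_alpha_less[OF j] assms(2-4) by simp
  ultimately show ?thesis using assms(1,2) j by (simp add: Q2_set_def Q_set_def partitions_def)
qed

definition p2_to_q2 :: "nat \<Rightarrow> nat list \<Rightarrow> nat list" where
  "p2_to_q2 m lam = (let j = durfee_j m lam in
     tl (take (m + j) lam) @ j # map Suc (durfee_beta m lam)
       @ replicate (hd lam + m - length lam) 1)"

definition q2_to_p2 :: "nat \<Rightarrow> nat list \<Rightarrow> nat list" where
  "q2_to_p2 m mu = (let j = durfee_j m mu in
     (length mu - m) # take (m + j - 1) mu
       @ map (\<lambda>x. x - 1) (filter (\<lambda>x. 2 \<le> x) (durfee_beta m mu)))"

locale P2_member =
  fixes m n :: nat and lam :: "nat list"
  assumes P2: "lam \<in> P2_set m n"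
begin

abbreviation "j \<equiv> durfee_j m lam"
abbreviation "front \<equiv> tl (take (m + j) lam)"
abbreviation "beta \<equiv> durfee_beta m lam"

lemma partition: "is_partition lam n"
  using P2 by (simp add: P2_set_def P_set_def partitions_def)

lemma sorted: "sorted_wrt (\<ge>) lam"
  and nonzero: "0 \<notin> set lam"
  and sum_eq: "sum_list lam = n"
  using partition by (simp_all add: is_partition_def)

lemma j_ge_1: "1 \<le> j"
  using P2 by (simp add: P2_set_def)

lemma length_gt_m: "m < length lam"
  using j_ge_1 by (auto simp: durfee_j_def split: if_splits)

lemma m_j_le_length: "m + j \<le> length lam" and j_le_nth: "j \<le> lam ! (m + j - 1)"
  using durfee_j_spec[OF nonzero length_gt_m] by simp_all

lemma first_part_beta: "first_part beta = j - 1"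
  using P2 by (simp add: P2_set_def)

lemma beta_less_j:
  assumes "x \<in> set beta"
  shows "x < j"
proof -
  have "x \<le> lam ! (m + j)"
    using nonincreasing_le_nth_of_drop[OF sorted] assms by (simp add: durfee_beta_def)
  also have "lam ! (m + j) = j - 1"
  proof -
    have "m + j < length lam"
      using assms by (metis durfee_beta_def drop_eq_Nil empty_iff linorder_not_le list.set(1))
    then show ?thesis
      using first_part_beta by (simp add: durfee_beta_def first_part_def hd_drop_conv_nth)
  qed
  finally show ?thesis using j_ge_1 by simp
qed

lemma j_eq_1_if_beta_empty: "beta = [] \<Longrightarrow> j = 1"
  using first_part_beta j_ge_1 by (simp add: first_part_def)

lemma j_le_front:
  assumes "x \<in> set front"
  shows "j \<le> x"
proof -
  have "x \<in> set (take (m + j) lam)"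
    using assms by (cases "take (m + j) lam") auto
  then show ?thesis
    using nonincreasing_nth_le_of_take[OF sorted] j_le_nth m_j_le_length le_trans by blast
qed

lemma length_less: "length lam < hd lam + m"
  using P2 length_gt_m by (auto simp: P2_set_def P_set_def rank_def first_part_def split: if_splits)

lemma le_hd: "x \<in> set lam \<Longrightarrow> x \<le> hd lam"
  using nonincreasing_nth_le_hd[OF sorted] by (auto simp: in_set_conv_nth)

lemma decompose: "lam = hd lam # front @ beta"
proof -
  have "take (m + j) lam \<noteq> []" using j_ge_1 length_gt_m by auto
  then have "take (m + j) lam = hd lam # front"
    using j_ge_1 by (metis hd_take list.collapse add_gr_0 less_le_trans zero_less_one)
  moreover have "lam = take (m + j) lam @ beta"
    by (simp add: durfee_beta_def)
  ultimately show ?thesis by (metis append_Cons)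
qed

lemma image_eq:
  "p2_to_q2 m lam = front @ j # map Suc beta @ replicate (hd lam + m - length lam) 1"
  by (simp add: p2_to_q2_def Let_def)

lemma length_front: "length front = m + j - 1"
  using m_j_le_length by simp

lemma length_beta: "length beta = length lam - (m + j)"
  by (simp add: durfee_beta_def)

lemma nth_image_front: "p2_to_q2 m lam ! (m + j - 1) = j"
  using length_front by (simp add: image_eq nth_append)

lemma nth_image_next: "p2_to_q2 m lam ! (m + j) = j"
proof -
  have "p2_to_q2 m lam ! Suc (length front)
      = (map Suc beta @ replicate (hd lam + m - length lam) 1) ! 0"
    by (simp add: image_eq nth_append)
  also have "\<dots> = j"
  proof (cases beta)
    case Nil
    then show ?thesis using j_eq_1_if_beta_empty length_less by simp
  next
    case (Cons b _)
    then show ?thesis using first_part_beta j_ge_1 by (simp add: first_part_def)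
  qed
  finally show ?thesis using length_front j_ge_1 by simp
qed

lemma length_image: "length (p2_to_q2 m lam) = hd lam + m"
  using length_front length_beta m_j_le_length length_less j_ge_1 by (simp add: image_eq)

lemma j_le_hd: "j \<le> hd lam"
proof -
  have "m + j - 1 < length lam" using m_j_le_length j_ge_1 by simp
  then show ?thesis using j_le_nth le_hd[OF nth_mem] le_trans by blast
qed

lemma front_subset: "set front \<subseteq> set lam"
  by (metis list.sel(2) list.set_sel(2) set_take_subset subset_code(1))

lemma image_le_hd: "y \<in> set (p2_to_q2 m lam) \<Longrightarrow> y \<le> hd lam"
  using le_hd front_subset beta_less_j j_le_hd j_ge_1 by (fastforce simp: image_eq)

lemma sorted_image: "sorted_wrt (\<ge>) (p2_to_q2 m lam)"
proof -
  define rest where "rest = map Suc beta @ replicate (hd lam + m - length lam) 1"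
  have sorted_front: "sorted_wrt (\<ge>) front"
    using sorted_wrt_take[OF sorted, of "m + j"] by (cases "take (m + j) lam") auto
  have "sorted_wrt (\<ge>) beta"
    using sorted by (simp add: durfee_beta_def)
  then have sorted_rest: "sorted_wrt (\<ge>) rest"
    by (auto simp: rest_def sorted_wrt_append sorted_wrt_map sorted_wrt_replicate)
  have rest_le_j: "z \<le> j" if "z \<in> set rest" for z
    using that beta_less_j j_ge_1 by (auto simp: rest_def Suc_le_eq)
  show ?thesis
    unfolding image_eq rest_def[symmetric]
    using sorted_front sorted_rest rest_le_j j_le_front
    by (auto simp: sorted_wrt_append intro: le_trans)
qed

lemma sum_image: "sum_list (p2_to_q2 m lam) = n"
proof -
  have "sum_list (p2_to_q2 m lam)
      = sum_list front + sum_list beta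
        + (j + length beta + (hd lam + m - length lam))"
    using sum_list_Suc[of id beta] by (simp add: image_eq sum_list_replicate)
  also have "j + length beta + (hd lam + m - length lam) = hd lam"
    using length_beta m_j_le_length length_less by simp
  also have "sum_list front + sum_list beta + hd lam = sum_list lam"
    by (subst (3) decompose) simp
  finally show ?thesis using sum_eq by simp
qed

lemma nonzero_beta: "0 \<notin> set beta"
  using nonzero by (auto simp: durfee_beta_def dest: in_set_dropD)

lemma is_partition_image: "is_partition (p2_to_q2 m lam) n"
proof -
  have "0 \<notin> set (p2_to_q2 m lam)"
    using nonzero front_subset j_ge_1 by (auto simp: image_eq)
  then show ?thesis using sorted_image sum_image by (simp add: is_partition_def)
qed

lemma m_j_less_length_image: "m + j < length (p2_to_q2 m lam)"
  using length_image m_j_le_length length_less by simp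

lemma durfee_j_image: "durfee_j m (p2_to_q2 m lam) = j"
  using durfee_j_eqI[OF sorted_image j_ge_1 m_j_less_length_image] nth_image_front nth_image_next
  by simp

lemma image_in_Q2: "p2_to_q2 m lam \<in> Q2_set m n"
proof (rule Q2_setI[OF is_partition_image j_ge_1 m_j_less_length_image
                        nth_image_front nth_image_next])
  have "p2_to_q2 m lam \<noteq> []" using m_j_less_length_image by auto
  then have "hd (p2_to_q2 m lam) \<le> hd lam" using image_le_hd by simp
  then show "hd (p2_to_q2 m lam) + m \<le> length (p2_to_q2 m lam)" using length_image by simp
qed

lemma q2_to_p2_image: "q2_to_p2 m (p2_to_q2 m lam) = lam"
proof -
  have "durfee_beta m (p2_to_q2 m lam) = map Suc beta @ replicate (hd lam + m - length lam) 1"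
    using durfee_j_image length_front j_ge_1 by (simp add: durfee_beta_def image_eq)
  moreover have "filter (\<lambda>x. 2 \<le> x) (map Suc beta) = map Suc beta"
    using nonzero_beta by (simp add: filter_id_conv Suc_le_eq) (metis gr0I)
  moreover have "take (m + j - 1) (p2_to_q2 m lam) = front"
    using length_front by (simp add: image_eq)
  ultimately have "q2_to_p2 m (p2_to_q2 m lam) = hd lam # front @ beta"
    using durfee_j_image length_image by (simp add: q2_to_p2_def comp_def)
  then show ?thesis using decompose by simp
qed

end

theorem lemma2p5:
  fixes m n :: nat
  assumes "n > 1"
  shows "\<exists>f. inj_on f (P2_set m n) \<and> f ` P2_set m n \<subseteq> Q2_set m n"
proof (intro exI conjI)
  show "inj_on (p2_to_q2 m) (P2_set m n)"
    by (rule inj_on_inverseI[where g = "q2_to_p2 m"])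
      (rule P2_member.q2_to_p2_image[OF P2_member.intro])
  show "p2_to_q2 m ` P2_set m n \<subseteq> Q2_set m n"
    using P2_member.intro P2_member.image_in_Q2 by blast
qed

end
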